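(* Let $n\in\{2,6,10,\dots\}$ and consider $f_{n+4}$ on $\{0,1\}^{n+4}$. (a) At any vertex with $x_{n+1}=x_{n+2}=1$, changing $x_{n+1}$ or $x_{n+2}$ to $0$ strictly decreases $f_{n+4}$; hence an increasing path that enters the subcube $\{x_{n+1}=x_{n+2}=1\}$ never leaves it. (b) At any vertex with $x_{n+3}=x_{n+4}=1$, changing $x_{n+3}$ or $x_{n+4}$ to $0$ strictly decreases $f_{n+4}$; hence an increasing path that enters the subcube $\{x_{n+3}=x_{n+4}=1\}$ never leaves it.
   Context: For $n\in\{2,6,10,\dots\}$ define polynomials $f_n$ in variables $x_1,\dots,x_n$ (evaluated on $\{0,1\}^n$) recursively. Set $f_2(x_1,x_2):=x_1+x_2$. For $n\in\{2,6,10,\dots\}$, write $\mathbf{x}=(x_1,\dots,x_n)$, $S:=\sum_{i=1}^n x_i$, let $M_n:=\max_{\{0,1\}^n} f_n-\min_{\{0,1\}^n} f_n+1$, and define $f_{n+4}(\mathbf{x},x_{n+1},x_{n+2},x_{n+3},x_{n+4}) := f_n(\mathbf{x}) - M_n n^2 x_{n+1} + M_n(n+1) S x_{n+1} - x_{n+2} - 2M_n n S x_{n+2} + 2M_n n(n+2) x_{n+1}x_{n+2} - 4 S x_{n+3} + 2x_{n+1}x_{n+3} + 2x_{n+2}x_{n+3} - 3x_{n+3} + (M_n(n-1)+4) S x_{n+4} + 6M_n n^2 x_{n+3}x_{n+4} - 5M_n n^2 x_{n+4}$. An increasing path is a sequence of vertices of the hypercube, consecutive ones differing in exactly one coordinate,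 along which the function value strictly increases. *)

theory Defs
  imports Main
begin

text \<open>Vertices of the hypercube {0,1}^n: functions x with x i \<in> {0,1} for 1 \<le> i \<le> n
  and x i = 0 outside {1..n} (so the cube is a finite set).\<close>
definition cube :: "nat \<Rightarrow> (nat \<Rightarrow> int) set" where
  "cube n = {x. (\<forall>i\<in>{1..n}. x i \<in> {0,1}) \<and> (\<forall>i. i \<notin> {1..n} \<longrightarrow> x i = 0)}"

text \<open>fpoly k is the polynomial f_n with n = 4k+2.\<close>
primrec fpoly :: "nat \<Rightarrow> (nat \<Rightarrow> int) \<Rightarrow> int" where
  "fpoly 0 = (\<lambda>x. x 1 + x 2)"
| "fpoly (Suc k) =
     (let g = fpoly k; n = 4 * k + 2;
          M = Max (g ` cube n) - Min (g ` cube n) + 1;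
          ni = int n
      in (\<lambda>x. let S = (\<Sum>i=1..n. x i) in
            g x - M * ni^2 * x (n+1) + M * (ni+1) * S * x (n+1)
            - x (n+2) - 2 * M * ni * S * x (n+2) + 2 * M * ni * (ni+2) * x (n+1) * x (n+2)
            - 4 * S * x (n+3) + 2 * x (n+1) * x (n+3) + 2 * x (n+2) * x (n+3) - 3 * x (n+3)
            + (M * (ni - 1) + 4) * S * x (n+4) + 6 * M * ni^2 * x (n+3) * x (n+4)
            - 5 * M * ni^2 * x (n+4)))"

definition f :: "nat \<Rightarrow> (nat \<Rightarrow> int) \<Rightarrow> int" where
  "f n = fpoly ((n - 2) div 4)"

definition adjacent :: "nat \<Rightarrow> (nat \<Rightarrow> int) \<Rightarrow> (nat \<Rightarrow> int) \<Rightarrow> bool" where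
  "adjacent n x y \<longleftrightarrow> card {i\<in>{1..n}. x i \<noteq> y i} = 1"

definition increasing_path :: "nat \<Rightarrow> ((nat \<Rightarrow> int) \<Rightarrow> int) \<Rightarrow> (nat \<Rightarrow> int) list \<Rightarrow> bool" where
  "increasing_path n g ps \<longleftrightarrow> set ps \<subseteq> cube n \<and>
     (\<forall>i. Suc i < length ps \<longrightarrow> adjacent n (ps ! i) (ps ! Suc i) \<and> g (ps ! i) < g (ps ! Suc i))"

end

theory Submission
  imports Defs
begin

text \<open>Put \<open>S = x\<^sub>1 + \<dots> + x\<^sub>n \<in> [0, n]\<close>. Apart from \<open>f\<^sub>n(x)\<close>, which ignores the four new
  variables, \<open>f\<^bsub>n+4\<^esub>\<close> is affine in each of \<open>x\<^bsub>n+1\<^esub>, \<dots>, x\<^bsub>n+4\<^esub>\<close>. On the face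
  \<open>x\<^bsub>n+1\<^esub> = x\<^bsub>n+2\<^esub> = 1\<close> the coefficients of \<open>x\<^bsub>n+1\<^esub>\<close> and \<open>x\<^bsub>n+2\<^esub>\<close> are
  \<open>M n\<^sup>2 + 4 M n + M (n + 1) S + 2 x\<^bsub>n+3\<^esub>\<close> and \<open>2 M n (n + 2 - S) - 1 + 2 x\<^bsub>n+3\<^esub>\<close>; on the face
  \<open>x\<^bsub>n+3\<^esub> = x\<^bsub>n+4\<^esub> = 1\<close> those of \<open>x\<^bsub>n+3\<^esub>\<close> and \<open>x\<^bsub>n+4\<^esub>\<close> are
  \<open>6 M n\<^sup>2 - 4 S - 3 + 2 x\<^bsub>n+1\<^esub> + 2 x\<^bsub>n+2\<^esub>\<close> and \<open>M n\<^sup>2 + (M (n - 1) + 4) S\<close>. All four are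
  positive as soon as \<open>M \<ge> 1\<close> and \<open>n \<ge> 2\<close>.
  An edge of the cube changes a single coordinate, so an increasing path could leave such a
  face only along an edge on which the function decreases.\<close>

lemma cube_coordinate:
  assumes "x \<in> cube m" "i \<in> {1..m}"
  shows "x i = 0 \<or> x i = 1"
  using assms unfolding cube_def by auto

lemma finite_cube: "finite (cube m)"
proof (rule finite_subset)
  show "cube m \<subseteq> (\<lambda>A i. if i \<in> A then 1 else 0) ` Pow {1..m}"
  proof
    fix x assume x: "x \<in> cube m"
    have "x i = (if i \<in> {i\<in>{1..m}. x i = 1} then 1 else 0)" for i
      using cube_coordinate[OF x, of i] x unfolding cube_def by (cases "i \<in> {1..m}") auto
    then have "x = (\<lambda>i. if i \<in> {i\<in>{1..m}. x i = 1} then 1 else 0)" ..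
    then show "x \<in> (\<lambda>A i. if i \<in> A then 1 else 0) ` Pow {1..m}" by blast
  qed
qed simp

lemma zero_in_cube: "(\<lambda>_. 0) \<in> cube m"
  unfolding cube_def by auto

lemma Min_le_Max_cube_image: "Min (g ` cube m) \<le> Max (g ` cube m)"
proof -
  have "Min (g ` cube m) \<le> g (\<lambda>_. 0)" "g (\<lambda>_. 0) \<le> Max (g ` cube m)"
    using finite_cube zero_in_cube by (auto intro: Min_le Max_ge)
  then show ?thesis by (rule order_trans)
qed

lemma cube_nonneg:
  assumes "x \<in> cube m"
  shows "0 \<le> x i"
proof (cases "i \<in> {1..m}")
  case True
  then show ?thesis using cube_coordinate[OF assms True] by auto
next
  case False
  then show ?thesis using assms unfolding cube_def by auto
qed

lemma sum_cube_bounds: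
  assumes "x \<in> cube m" "n \<le> m"
  shows "0 \<le> (\<Sum>i=1..n. x i)" "(\<Sum>i=1..n. x i) \<le> int n"
proof -
  have coord: "0 \<le> x i \<and> x i \<le> 1" if "i \<in> {1..n}" for i
    using cube_coordinate[OF assms(1), of i] that assms(2) by auto
  show "0 \<le> (\<Sum>i=1..n. x i)" using coord by (intro sum_nonneg) blast
  have "(\<Sum>i=1..n. x i) \<le> (\<Sum>i=1..n. 1)" using coord by (intro sum_mono) blast
  then show "(\<Sum>i=1..n. x i) \<le> int n" by simp
qed

lemma adjacent_cube_eq_flip:
  assumes "x \<in> cube m" "y \<in> cube m" "adjacent m x y" "i \<in> {1..m}" "x i \<noteq> y i"
  shows "y = x(i := 1 - x i)"
proof
  fix j
  obtain a where a: "{j\<in>{1..m}. x j \<noteq> y j} = {a}"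
    using assms(3) unfolding adjacent_def by (auto simp: card_Suc_eq)
  then have "i = a" using assms(4,5) by auto
  show "y j = (x(i := 1 - x i)) j"
  proof (cases "j = i")
    case True
    then show ?thesis
      using cube_coordinate[OF assms(1,4)] cube_coordinate[OF assms(2,4)] assms(5) by auto
  next
    case False
    then have "j \<notin> {j\<in>{1..m}. x j \<noteq> y j}" using a \<open>i = a\<close> by auto
    then show ?thesis using False assms(1,2) unfolding cube_def by auto
  qed
qed

lemma increasing_step_stays_in_face:
  fixes F :: "(nat \<Rightarrow> int) \<Rightarrow> 'a::preorder"
  assumes "x \<in> cube m" "y \<in> cube m" "adjacent m x y" "F x < F y"
    and "J \<subseteq> {1..m}" "\<forall>j\<in>J. x j = 1"
    and leave_decreases: "\<And>j. j \<in> J \<Longrightarrow> F (x(j := 0)) < F x"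
  shows "\<forall>j\<in>J. y j = 1"
proof (rule ccontr)
  assume "\<not> (\<forall>j\<in>J. y j = 1)"
  then obtain j where j: "j \<in> J" "x j \<noteq> y j" using assms(6) by auto
  then have "y = x(j := 0)"
    using adjacent_cube_eq_flip[OF assms(1-3), of j] assms(5,6) by auto
  then show False using leave_decreases[OF j(1)] less_asym[OF assms(4)] by simp
qed

lemma increasing_path_stays_in_face:
  assumes path: "increasing_path m F ps"
    and "J \<subseteq> {1..m}"
    and leave_decreases: "\<And>x j. x \<in> cube m \<Longrightarrow> \<forall>i\<in>J. x i = 1 \<Longrightarrow> j \<in> J \<Longrightarrow> F (x(j := 0)) < F x"
    and "i \<le> l" "l < length ps" "\<forall>j\<in>J. (ps ! i) j = 1"
  shows "\<forall>j\<in>J. (ps ! l) j = 1"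
  using \<open>i \<le> l\<close> \<open>l < length ps\<close>
proof (induction l rule: dec_induct)
  case base
  then show ?case using assms(6) by simp
next
  case (step l)
  have vertices: "ps ! l \<in> cube m" "ps ! Suc l \<in> cube m"
    using path step.prems unfolding increasing_path_def by auto
  have "adjacent m (ps ! l) (ps ! Suc l)" "F (ps ! l) < F (ps ! Suc l)"
    using path step.prems unfolding increasing_path_def by auto
  moreover have "\<forall>j\<in>J. (ps ! l) j = 1" using step by simp
  ultimately show ?case
    using increasing_step_stays_in_face[OF vertices] leave_decreases[OF vertices(1)] assms(2)
    by blast
qed

lemma increasing_path_stays_in_pair_face:
  assumes "{p, q} \<subseteq> {1..m}"
    and "\<forall>x\<in>cube m. x p = 1 \<and> x q = 1 \<longrightarrow> F (x(p := 0)) < F x \<and> F (x(q := 0)) < F x"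
  shows "\<forall>ps. increasing_path m F ps \<longrightarrow>
    (\<forall>i j. i \<le> j \<and> j < length ps \<and> (ps!i) p = 1 \<and> (ps!i) q = 1 \<longrightarrow>
      (ps!j) p = 1 \<and> (ps!j) q = 1)"
proof (intro allI impI, elim conjE)
  fix ps i j
  assume path: "increasing_path m F ps" and "i \<le> j" "j < length ps" "(ps!i) p = 1" "(ps!i) q = 1"
  have "F (x(k := 0)) < F x" if "x \<in> cube m" "\<forall>i\<in>{p, q}. x i = 1" "k \<in> {p, q}" for x k
    using assms(2) that by auto
  then have "\<forall>k\<in>{p, q}. (ps!j) k = 1"
    using increasing_path_stays_in_face[OF path assms(1)] \<open>i \<le> j\<close> \<open>j < length ps\<close>
      \<open>(ps!i) p = 1\<close> \<open>(ps!i) q = 1\<close>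
    by blast
  then show "(ps!j) p = 1 \<and> (ps!j) q = 1" by simp
qed

lemma fpoly_cong: "(\<And>i. i \<in> {1..4*k+2} \<Longrightarrow> x i = y i) \<Longrightarrow> fpoly k x = fpoly k y"
proof (induction k arbitrary: x y)
  case 0
  then show ?case by simp
next
  case (Suc k)
  have agree: "x i = y i" if "i \<in> {1..4*k+6}" for i
    using Suc.prems that by simp
  have base: "fpoly k x = fpoly k y"
    using agree by (intro Suc.IH) auto
  have sum: "(\<Sum>i=1..4*k+2. x i) = (\<Sum>i=1..4*k+2. y i)"
    using agree by (intro sum.cong) auto
  have new: "x (4*k+2+1) = y (4*k+2+1)" "x (4*k+2+2) = y (4*k+2+2)"
    "x (4*k+2+3) = y (4*k+2+3)" "x (4*k+2+4) = y (4*k+2+4)"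
    using agree by simp_all
  show ?case by (simp only: fpoly.simps Let_def base sum new)
qed

definition fpoly_step :: "int \<Rightarrow> int \<Rightarrow> int \<Rightarrow> int \<Rightarrow> int \<Rightarrow> int \<Rightarrow> int \<Rightarrow> int \<Rightarrow> int" where
  "fpoly_step M N G S a b c d =
     G - M * N^2 * a + M * (N+1) * S * a
     - b - 2 * M * N * S * b + 2 * M * N * (N+2) * a * b
     - 4 * S * c + 2 * a * c + 2 * b * c - 3 * c
     + (M * (N - 1) + 4) * S * d + 6 * M * N^2 * c * d
     - 5 * M * N^2 * d"

lemma f_eq_fpoly_step:
  assumes "n = 4*k+2"
  obtains M where "M \<ge> 1" and "\<And>x. f (n+4) x =
    fpoly_step M (int n) (fpoly k x) (\<Sum>i=1..n. x i) (x (n+1)) (x (n+2)) (x (n+3)) (x (n+4))"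
proof
  let ?M = "Max (fpoly k ` cube n) - Min (fpoly k ` cube n) + 1"
  show "?M \<ge> 1" using Min_le_Max_cube_image by simp
  have "(n + 4 - 2) div 4 = Suc k" using assms by simp
  then show "f (n+4) x =
    fpoly_step ?M (int n) (fpoly k x) (\<Sum>i=1..n. x i) (x (n+1)) (x (n+2)) (x (n+3)) (x (n+4))" for x
    unfolding f_def fpoly_step_def using assms by (simp only: fpoly.simps Let_def)
qed

lemma fpoly_step_leave_face_12:
  assumes "M \<ge> 1" "N \<ge> 2" "0 \<le> S" "S \<le> N" "0 \<le> c"
  shows "fpoly_step M N G S 0 1 c d < fpoly_step M N G S 1 1 c d"
    and "fpoly_step M N G S 1 0 c d < fpoly_step M N G S 1 1 c d"
proof -
  have "fpoly_step M N G S 1 1 c d - fpoly_step M N G S 0 1 c d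
      = M * N * N + 4 * (M * N) + M * (N+1) * S + 2 * c"
    and "fpoly_step M N G S 1 1 c d - fpoly_step M N G S 1 0 c d
      = 2 * (M * N * N - M * N * S) + 4 * (M * N) - 1 + 2 * c"
    unfolding fpoly_step_def by (simp_all add: algebra_simps power2_eq_square)
  moreover have "0 < M * N" "0 \<le> M * N * N" "0 \<le> M * (N+1) * S" "M * N * S \<le> M * N * N"
    using assms by (simp_all add: mult_left_mono)
  ultimately show "fpoly_step M N G S 0 1 c d < fpoly_step M N G S 1 1 c d"
    and "fpoly_step M N G S 1 0 c d < fpoly_step M N G S 1 1 c d"
    using assms(5) by simp_all
qed

lemma fpoly_step_leave_face_34:
  assumes "M \<ge> 1" "N \<ge> 2" "0 \<le> S" "S \<le> N" "0 \<le> a" "0 \<le> b"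
  shows "fpoly_step M N G S a b 0 1 < fpoly_step M N G S a b 1 1"
    and "fpoly_step M N G S a b 1 0 < fpoly_step M N G S a b 1 1"
proof -
  have "fpoly_step M N G S a b 1 1 - fpoly_step M N G S a b 0 1
      = 6 * (M * N * N) - 4 * S + 2 * a + 2 * b - 3"
    and "fpoly_step M N G S a b 1 1 - fpoly_step M N G S a b 1 0
      = M * N * N + (M * (N - 1) + 4) * S"
    unfolding fpoly_step_def by (simp_all add: algebra_simps power2_eq_square)
  moreover have "N * N \<le> M * N * N" "2 * N \<le> N * N" "0 \<le> (M * (N - 1) + 4) * S"
    using assms by (simp_all add: mult_right_mono)
  ultimately show "fpoly_step M N G S a b 0 1 < fpoly_step M N G S a b 1 1"
    and "fpoly_step M N G S a b 1 0 < fpoly_step M N G S a b 1 1"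
    using assms by linarith+
qed

lemma f_decreases_leaving_face:
  assumes "n mod 4 = 2"
  shows "\<forall>x\<in>cube (n+4). x (n+1) = 1 \<and> x (n+2) = 1 \<longrightarrow>
      f (n+4) (x(n+1 := 0)) < f (n+4) x \<and> f (n+4) (x(n+2 := 0)) < f (n+4) x"
    and "\<forall>x\<in>cube (n+4). x (n+3) = 1 \<and> x (n+4) = 1 \<longrightarrow>
      f (n+4) (x(n+3 := 0)) < f (n+4) x \<and> f (n+4) (x(n+4 := 0)) < f (n+4) x"
proof -
  define k where "k = n div 4"
  have n: "n = 4*k+2" unfolding k_def using assms div_mult_mod_eq[of n 4] by linarith
  obtain M where M: "M \<ge> 1" and f: "\<And>x. f (n+4) x =
    fpoly_step M (int n) (fpoly k x) (\<Sum>i=1..n. x i) (x (n+1)) (x (n+2)) (x (n+3)) (x (n+4))"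
    using f_eq_fpoly_step[OF n] by blast
  have high_update: "fpoly k (x(j := 0)) = fpoly k x" "(\<Sum>i=1..n. (x(j := 0)) i) = (\<Sum>i=1..n. x i)"
    if "n < j" for x j
    using that n by (auto intro: fpoly_cong)
  have N: "int n \<ge> 2" using n by simp
  show "\<forall>x\<in>cube (n+4). x (n+1) = 1 \<and> x (n+2) = 1 \<longrightarrow>
      f (n+4) (x(n+1 := 0)) < f (n+4) x \<and> f (n+4) (x(n+2 := 0)) < f (n+4) x"
  proof (intro ballI impI)
    fix x assume x: "x \<in> cube (n+4)" and "x (n+1) = 1 \<and> x (n+2) = 1"
    then show "f (n+4) (x(n+1 := 0)) < f (n+4) x \<and> f (n+4) (x(n+2 := 0)) < f (n+4) x"
      using fpoly_step_leave_face_12[OF M N sum_cube_bounds[OF x]] cube_nonneg[OF x]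
      by (simp add: f high_update)
  qed
  show "\<forall>x\<in>cube (n+4). x (n+3) = 1 \<and> x (n+4) = 1 \<longrightarrow>
      f (n+4) (x(n+3 := 0)) < f (n+4) x \<and> f (n+4) (x(n+4 := 0)) < f (n+4) x"
  proof (intro ballI impI)
    fix x assume x: "x \<in> cube (n+4)" and "x (n+3) = 1 \<and> x (n+4) = 1"
    then show "f (n+4) (x(n+3 := 0)) < f (n+4) x \<and> f (n+4) (x(n+4 := 0)) < f (n+4) x"
      using fpoly_step_leave_face_34[OF M N sum_cube_bounds[OF x]] cube_nonneg[OF x]
      by (simp add: f high_update)
  qed
qed

theorem mainTheorem8:
  fixes n :: nat
  assumes "n mod 4 = 2"
  shows
   "(\<forall>x\<in>cube (n+4). x (n+1) = 1 \<and> x (n+2) = 1 \<longrightarrow>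
        f (n+4) (x(n+1 := 0)) < f (n+4) x \<and> f (n+4) (x(n+2 := 0)) < f (n+4) x)
  \<and> (\<forall>ps. increasing_path (n+4) (f (n+4)) ps \<longrightarrow>
        (\<forall>i j. i \<le> j \<and> j < length ps \<and> (ps!i) (n+1) = 1 \<and> (ps!i) (n+2) = 1 \<longrightarrow>
               (ps!j) (n+1) = 1 \<and> (ps!j) (n+2) = 1))
  \<and> (\<forall>x\<in>cube (n+4). x (n+3) = 1 \<and> x (n+4) = 1 \<longrightarrow>
        f (n+4) (x(n+3 := 0)) < f (n+4) x \<and> f (n+4) (x(n+4 := 0)) < f (n+4) x)
  \<and> (\<forall>ps. increasing_path (n+4) (f (n+4)) ps \<longrightarrow>
        (\<forall>i j. i \<le> j \<and> j < length ps \<and> (ps!i) (n+3) = 1 \<and> (ps!i) (n+4) = 1 \<longrightarrow>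
               (ps!j) (n+3) = 1 \<and> (ps!j) (n+4) = 1))"
proof -
  note leave = f_decreases_leaving_face[OF assms]
  have faces: "{n+1, n+2} \<subseteq> {1..n+4}" "{n+3, n+4} \<subseteq> {1..n+4}" by auto
  show ?thesis
    by (intro conjI leave increasing_path_stays_in_pair_face[OF faces(1) leave(1)]
        increasing_path_stays_in_pair_face[OF faces(2) leave(2)])
qed

end
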